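(* Let $K\ge2$, $0<q<p$ with $p+(K-1)q=1$, $\phi\in\Delta$ with $\phi_1\le\cdots\le\phi_K$, and $n\in\{1,\dots,K-1\}$. If $\theta^{[n-1]}\in\Delta$, then $\theta^{[n]}\in\Delta$ and $D_{KL}(\phi,\mathcal{M}(\theta^{[n-1]}))\le D_{KL}(\phi,\mathcal{M}(\theta^{[n]}))$.
   Context: $\Delta=\{\theta\in\mathbb{R}^K:\theta_i\ge0,\sum_i\theta_i=1\}$. $\mathcal{M}(\theta)_y=q+(p-q)\theta_y$. $D_{KL}(\phi,\psi)=\sum_i\phi_i\log(\phi_i/\psi_i)$ with $0\log(0/\cdot)=0$. For sorted $\phi$ and $m\in\{0,\dots,K-1\}$: $\lambda^{[m]}=\frac{(p-q)\sum_{i>m}\phi_i}{1-mq}$, and $\theta^{[m]}_i=0$ for $i\le m$, $\theta^{[m]}_i=\frac{\phi_i}{\lambda^{[m]}}-\frac{q}{p-q}$ for $i>m$. *)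

theory Defs
  imports Complex_Main
begin

text \<open>Vectors in R^K are functions nat => real indexed by {1..K}.\<close>

definition simplex :: "nat \<Rightarrow> (nat \<Rightarrow> real) set" where
  "simplex K = {\<theta>. (\<forall>i\<in>{1..K}. 0 \<le> \<theta> i) \<and> (\<Sum>i=1..K. \<theta> i) = 1}"

definition Mch :: "real \<Rightarrow> real \<Rightarrow> (nat \<Rightarrow> real) \<Rightarrow> nat \<Rightarrow> real" where
  "Mch p q \<theta> y = q + (p - q) * \<theta> y"

definition DKL :: "nat \<Rightarrow> (nat \<Rightarrow> real) \<Rightarrow> (nat \<Rightarrow> real) \<Rightarrow> real" where
  "DKL K \<phi> \<psi> = (\<Sum>i=1..K. if \<phi> i = 0 then 0 else \<phi> i * ln (\<phi> i / \<psi> i))"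

definition lam :: "nat \<Rightarrow> real \<Rightarrow> real \<Rightarrow> (nat \<Rightarrow> real) \<Rightarrow> nat \<Rightarrow> real" where
  "lam K p q \<phi> m = (p - q) * (\<Sum>i\<in>{m<..K}. \<phi> i) / (1 - real m * q)"

definition theta :: "nat \<Rightarrow> real \<Rightarrow> real \<Rightarrow> (nat \<Rightarrow> real) \<Rightarrow> nat \<Rightarrow> nat \<Rightarrow> real" where
  "theta K p q \<phi> m i = (if i \<le> m then 0 else \<phi> i / lam K p q \<phi> m - q / (p - q))"

end

theory Submission
  imports Defs
begin

text \<open>
  Write S(m) for the tail mass of \<phi> beyond m and c(m) = 1 - m q, so that
  \<lambda>[m] = (p - q) S(m) / c(m). The channel output of \<theta>[m] is q on the first m
  coordinates and \<phi> i c(m) / S(m) on the others, hence its divergence from \<phi> is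
  the sum of \<phi> i ln (\<phi> i / q) over i \<le> m plus S(m) ln (S(m) / c(m)).
  Since S(m) = \<phi> (m + 1) + S(m + 1) and c(m) = q + c(m + 1), the log-sum inequality
  shows that this divergence grows with m. As for the simplex: \<theta>[m] always sums to
  one, and it is nonnegative iff q S(m) \<le> \<phi> i c(m) for all i > m, which by
  sortedness reduces to i = m + 1. The margin \<phi> (m + 1) c(m) - q S(m) is unchanged
  when m is replaced by m + 1, so nonnegativity propagates from \<theta>[n - 1] to \<theta>[n].
\<close>

lemma mult_ln_div_lower_bound:
  fixes a x t :: real
  assumes "0 \<le> a" "0 < x" "0 < t"
  shows "a * ln t + a - t * x \<le> a * ln (a / x)"
proof (cases "a = 0")
  case False
  with assms have "0 < a" by simp
  have ln_xt: "ln (x * t / a) = ln x + ln t - ln a" and ln_ax: "ln (a / x) = ln a - ln x"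
    using \<open>0 < a\<close> assms by (simp_all add: ln_div ln_mult)
  have "ln (x * t / a) \<le> x * t / a - 1"
    using \<open>0 < a\<close> assms by (intro ln_le_minus_one) simp
  then have "a * (ln x + ln t - ln a) \<le> x * t - a"
    unfolding ln_xt using \<open>0 < a\<close> mult_left_mono[of _ _ a] by (fastforce simp: right_diff_distrib)
  then show ?thesis
    unfolding ln_ax by (simp add: algebra_simps)
qed (use assms in simp)

lemma log_sum_inequality:
  fixes a b x y :: real
  assumes "0 \<le> a" "0 \<le> b" "0 < x" "0 < y"
  shows "(a + b) * ln ((a + b) / (x + y)) \<le> a * ln (a / x) + b * ln (b / y)"
proof (cases "a + b = 0")
  case False
  define t where "t = (a + b) / (x + y)"
  have "0 < t"
    using False assms by (simp add: t_def)
  have "t * (x + y) = a + b"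
    using assms by (simp add: t_def)
  then have "(a + b) * ln t = (a * ln t + a - t * x) + (b * ln t + b - t * y)"
    by (simp add: algebra_simps)
  also have "\<dots> \<le> a * ln (a / x) + b * ln (b / y)"
    using assms \<open>0 < t\<close> by (intro add_mono mult_ln_div_lower_bound)
  finally show ?thesis
    by (simp add: t_def)
next
  case True
  with assms have "a = 0" "b = 0"
    by linarith+
  then show ?thesis
    by simp
qed

lemma sum_atLeastAtMost_split_greaterThan:
  fixes f :: "nat \<Rightarrow> 'a::comm_monoid_add"
  assumes "m \<le> K"
  shows "(\<Sum>i=1..K. f i) = (\<Sum>i=1..m. f i) + (\<Sum>i\<in>{m<..K}. f i)"
proof -
  have "{1..K} = {1..m} \<union> {m<..K}"
    using assms by auto
  then have "(\<Sum>i=1..K. f i) = sum f ({1..m} \<union> {m<..K})"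
    by simp
  also have "\<dots> = (\<Sum>i=1..m. f i) + (\<Sum>i\<in>{m<..K}. f i)"
    by (rule sum.union_disjoint) auto
  finally show ?thesis .
qed

lemma one_minus_mult_q_pos:
  fixes p q :: real
  assumes "0 < q" "q < p" "p + (real K - 1) * q = 1" "m \<le> K"
  shows "0 < 1 - real m * q"
proof -
  have "real m * q \<le> real K * q"
    using assms(1,4) by (intro mult_right_mono) auto
  then show ?thesis
    using assms(2,3) by (simp add: algebra_simps)
qed

definition tail_mass :: "nat \<Rightarrow> (nat \<Rightarrow> real) \<Rightarrow> nat \<Rightarrow> real" where
  "tail_mass K \<phi> m = (\<Sum>i\<in>{m<..K}. \<phi> i)"

lemma lam_eq_tail_mass: "lam K p q \<phi> m = (p - q) * tail_mass K \<phi> m / (1 - real m * q)"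
  by (simp add: lam_def tail_mass_def)

lemma tail_mass_eq_Suc:
  assumes "m < K"
  shows "tail_mass K \<phi> m = \<phi> (Suc m) + tail_mass K \<phi> (Suc m)"
proof -
  have "{m<..K} = insert (Suc m) {Suc m<..K}"
    using assms by auto
  then show ?thesis
    by (simp add: tail_mass_def)
qed

lemma tail_mass_pos:
  assumes "\<phi> \<in> simplex K"
    and sorted: "\<forall>i j. 1 \<le> i \<longrightarrow> i \<le> j \<longrightarrow> j \<le> K \<longrightarrow> \<phi> i \<le> \<phi> j"
    and "m < K"
  shows "0 < tail_mass K \<phi> m"
proof -
  have nonneg: "\<And>i. i \<in> {1..K} \<Longrightarrow> 0 \<le> \<phi> i" and "(\<Sum>i=1..K. \<phi> i) = 1"
    using assms(1) by (auto simp: simplex_def)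
  moreover have "(\<Sum>i=1..K. \<phi> i) \<le> (\<Sum>i=1..K. \<phi> K)"
    using sorted by (intro sum_mono) auto
  ultimately have "0 < real K * \<phi> K"
    by simp
  then have "0 < \<phi> K"
    by (simp add: zero_less_mult_iff)
  also have "\<phi> K \<le> tail_mass K \<phi> m"
    unfolding tail_mass_def using assms(3) nonneg by (intro member_le_sum) auto
  finally show ?thesis .
qed

lemma Mch_theta_le:
  "i \<le> m \<Longrightarrow> Mch p q (theta K p q \<phi> m) i = q"
  by (simp add: Mch_def theta_def)

text \<open>No positivity of the tail mass is needed: if it vanishes, both sides are 0 since x / 0 = 0.\<close>

lemma Mch_theta_gt:
  assumes "m < i" "p \<noteq> q"
  shows "Mch p q (theta K p q \<phi> m) i = \<phi> i * (1 - real m * q) / tail_mass K \<phi> m"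
proof -
  have "Mch p q (theta K p q \<phi> m) i =
      q + (p - q) * (\<phi> i * (1 - real m * q) / ((p - q) * tail_mass K \<phi> m) - q / (p - q))"
    using assms(1) by (simp add: Mch_def theta_def lam_eq_tail_mass)
  also have "\<dots> = \<phi> i * (1 - real m * q) / tail_mass K \<phi> m"
    using assms(2) by (simp add: right_diff_distrib[of "p - q"])
  finally show ?thesis .
qed

lemma theta_gt:
  assumes "m < i" "p \<noteq> q" "tail_mass K \<phi> m \<noteq> 0"
  shows "theta K p q \<phi> m i =
    (\<phi> i * (1 - real m * q) - q * tail_mass K \<phi> m) / ((p - q) * tail_mass K \<phi> m)"
proof -
  have "theta K p q \<phi> m i =
      \<phi> i * (1 - real m * q) / ((p - q) * tail_mass K \<phi> m) - q / (p - q)"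
    using assms(1) by (simp add: theta_def lam_eq_tail_mass)
  also have "\<dots> =
      (\<phi> i * (1 - real m * q) - q * tail_mass K \<phi> m) / ((p - q) * tail_mass K \<phi> m)"
    using assms(2,3) by (simp add: diff_divide_distrib)
  finally show ?thesis .
qed

lemma theta_nonneg_iff:
  assumes "m < i" "q < p" "0 < tail_mass K \<phi> m"
  shows "0 \<le> theta K p q \<phi> m i \<longleftrightarrow> q * tail_mass K \<phi> m \<le> \<phi> i * (1 - real m * q)"
proof -
  have "0 < (p - q) * tail_mass K \<phi> m"
    using assms(2,3) by simp
  then show ?thesis
    using assms by (simp add: theta_gt le_divide_eq)
qed

lemma sum_theta_eq_1:
  assumes "p + (real K - 1) * q = 1" "p \<noteq> q" "m \<le> K" "tail_mass K \<phi> m \<noteq> 0"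
  shows "(\<Sum>i=1..K. theta K p q \<phi> m i) = 1"
proof -
  let ?S = "tail_mass K \<phi> m"
  have "(\<Sum>i=1..m. theta K p q \<phi> m i) = 0"
    by (intro sum.neutral) (simp add: theta_def)
  then have "(\<Sum>i=1..K. theta K p q \<phi> m i) = (\<Sum>i\<in>{m<..K}. theta K p q \<phi> m i)"
    using sum_atLeastAtMost_split_greaterThan[OF assms(3), of "theta K p q \<phi> m"] by simp
  also have "\<dots> = (\<Sum>i\<in>{m<..K}. (\<phi> i * (1 - real m * q) - q * ?S) / ((p - q) * ?S))"
    using assms by (intro sum.cong) (simp_all add: theta_gt)
  also have "\<dots> = (\<Sum>i\<in>{m<..K}. \<phi> i * (1 - real m * q) - q * ?S) / ((p - q) * ?S)"
    by (simp add: sum_divide_distrib)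
  also have "\<dots> = (?S * (1 - real m * q) - real (K - m) * q * ?S) / ((p - q) * ?S)"
    by (simp add: sum_subtractf sum_distrib_right tail_mass_def)
  also have "\<dots> = ((1 - real K * q) * ?S) / ((p - q) * ?S)"
    using assms(3) by (simp add: of_nat_diff algebra_simps)
  also have "1 - real K * q = p - q"
    using assms(1) by (simp add: algebra_simps)
  finally show ?thesis
    using assms by simp
qed

lemma DKL_Mch_theta:
  assumes "m \<le> K" "p \<noteq> q"
  shows "DKL K \<phi> (Mch p q (theta K p q \<phi> m)) =
    (\<Sum>i=1..m. \<phi> i * ln (\<phi> i / q)) +
    tail_mass K \<phi> m * ln (tail_mass K \<phi> m / (1 - real m * q))"
proof -
  let ?M = "Mch p q (theta K p q \<phi> m)"
  have "DKL K \<phi> ?M = (\<Sum>i=1..K. \<phi> i * ln (\<phi> i / ?M i))"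
    unfolding DKL_def by (intro sum.cong) auto
  also have "\<dots> = (\<Sum>i=1..m. \<phi> i * ln (\<phi> i / ?M i)) + (\<Sum>i\<in>{m<..K}. \<phi> i * ln (\<phi> i / ?M i))"
    using assms(1) by (rule sum_atLeastAtMost_split_greaterThan)
  also have "(\<Sum>i=1..m. \<phi> i * ln (\<phi> i / ?M i)) = (\<Sum>i=1..m. \<phi> i * ln (\<phi> i / q))"
    by (intro sum.cong) (simp_all add: Mch_theta_le)
  also have "(\<Sum>i\<in>{m<..K}. \<phi> i * ln (\<phi> i / ?M i)) =
      (\<Sum>i\<in>{m<..K}. \<phi> i * ln (tail_mass K \<phi> m / (1 - real m * q)))"
    using assms(2) by (intro sum.cong) (auto simp: Mch_theta_gt)
  finally show ?thesis
    by (simp add: tail_mass_def sum_distrib_right)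
qed

lemma DKL_Mch_theta_le_Suc:
  assumes "\<phi> \<in> simplex K" "0 < q" "q < p" "p + (real K - 1) * q = 1" "Suc m \<le> K"
  shows "DKL K \<phi> (Mch p q (theta K p q \<phi> m)) \<le> DKL K \<phi> (Mch p q (theta K p q \<phi> (Suc m)))"
proof -
  have "0 \<le> \<phi> i" if "i \<in> {1..K}" for i
    using assms(1) that by (simp add: simplex_def)
  then have "0 \<le> \<phi> (Suc m)" "0 \<le> tail_mass K \<phi> (Suc m)"
    using assms(5) by (auto simp: tail_mass_def intro: sum_nonneg)
  moreover have "0 < 1 - real (Suc m) * q"
    using assms(2-5) by (rule one_minus_mult_q_pos)
  moreover have "tail_mass K \<phi> m = \<phi> (Suc m) + tail_mass K \<phi> (Suc m)"
    using assms(5) by (simp add: tail_mass_eq_Suc)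
  moreover have "1 - real m * q = q + (1 - real (Suc m) * q)"
    by (simp add: algebra_simps)
  ultimately have "tail_mass K \<phi> m * ln (tail_mass K \<phi> m / (1 - real m * q)) \<le>
      \<phi> (Suc m) * ln (\<phi> (Suc m) / q) +
      tail_mass K \<phi> (Suc m) * ln (tail_mass K \<phi> (Suc m) / (1 - real (Suc m) * q))"
    using assms(2) by (simp only: log_sum_inequality)
  then show ?thesis
    using assms(3,5) by (simp add: DKL_Mch_theta)
qed

lemma theta_Suc_in_simplex:
  assumes "\<phi> \<in> simplex K"
    and sorted: "\<forall>i j. 1 \<le> i \<longrightarrow> i \<le> j \<longrightarrow> j \<le> K \<longrightarrow> \<phi> i \<le> \<phi> j"
    and "0 < q" "q < p" "p + (real K - 1) * q = 1" "Suc m < K"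
    and "theta K p q \<phi> m \<in> simplex K"
  shows "theta K p q \<phi> (Suc m) \<in> simplex K"
proof -
  let ?S = "tail_mass K \<phi>" and ?c = "\<lambda>m. 1 - real m * q"
  have S_pos: "0 < ?S m" "0 < ?S (Suc m)"
    using assms(6) by (simp_all add: tail_mass_pos[OF assms(1) sorted])
  have "0 \<le> theta K p q \<phi> m (Suc m)"
    using assms(6,7) by (simp add: simplex_def)
  then have "q * ?S m \<le> \<phi> (Suc m) * ?c m"
    using S_pos assms(4) by (simp add: theta_nonneg_iff)
  then have margin: "q * ?S (Suc m) \<le> \<phi> (Suc m) * ?c (Suc m)"
    using assms(6) by (simp add: tail_mass_eq_Suc algebra_simps)
  have "0 < ?c (Suc m)"
    using assms(3-6) by (intro one_minus_mult_q_pos) auto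
  have "0 \<le> theta K p q \<phi> (Suc m) i" if "i \<in> {1..K}" for i
  proof (cases "i \<le> Suc m")
    case False
    then have "\<phi> (Suc m) * ?c (Suc m) \<le> \<phi> i * ?c (Suc m)"
      using sorted that \<open>0 < ?c (Suc m)\<close> by (intro mult_right_mono) auto
    with margin show ?thesis
      using False S_pos assms(4) by (simp add: theta_nonneg_iff)
  qed (simp add: theta_def)
  moreover have "(\<Sum>i=1..K. theta K p q \<phi> (Suc m) i) = 1"
    using assms(4,5,6) S_pos by (intro sum_theta_eq_1) auto
  ultimately show ?thesis
    by (simp add: simplex_def)
qed

theorem lemma4:
  fixes K n :: nat and p q :: real and \<phi> :: "nat \<Rightarrow> real"
  assumes "K \<ge> 2" and "0 < q" and "q < p" and "p + (real K - 1) * q = 1"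
    and "\<phi> \<in> simplex K"
    and "\<forall>i j. 1 \<le> i \<longrightarrow> i \<le> j \<longrightarrow> j \<le> K \<longrightarrow> \<phi> i \<le> \<phi> j"
    and "1 \<le> n" and "n \<le> K - 1"
    and "theta K p q \<phi> (n - 1) \<in> simplex K"
  shows "theta K p q \<phi> n \<in> simplex K \<and>
         DKL K \<phi> (Mch p q (theta K p q \<phi> (n - 1))) \<le> DKL K \<phi> (Mch p q (theta K p q \<phi> n))"
proof -
  obtain m where n: "n = Suc m"
    using assms(7) by (cases n) auto
  have "Suc m < K"
    using assms(1,8) n by linarith
  then show ?thesis
    using theta_Suc_in_simplex[OF assms(5,6,2,3,4)] DKL_Mch_theta_le_Suc[OF assms(5,2,3,4)] assms(9)
    unfolding n by simp
qed

end
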